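(* Let $\mu\in\mathcal P_2(\mathbb R^d)$, $\psi\in T_\mu(\mathcal P_2(\mathbb R^d))$, let $\eta\in\mathcal P(C([0,1],\mathbb R^d))$ satisfy $(e_0)_\#\eta=\mu$, and let $\Psi$ be a parallel transport of $\psi$ along $\eta$. Then for every $t\in[0,1]$ there exists a measurable map $x\mapsto\psi_{t,x}\in\mathcal P(\mathbb R^d)$ with $\int_{\mathbb R^d}\int_{\mathbb R^d}|z|^2\psi_{t,x}(dz)\,((e_t)_\#\eta)(dx)<\infty$ such that $(e_t)_\#\Psi(dx,dz)=((e_t)_\#\eta)(dx)\,\psi_{t,x}(dz)$; i.e. $(e_t)_\#\Psi$ corresponds to an element $\psi_t\in T_{(e_t)_\#\eta}(\mathcal P_2(\mathbb R^d))$.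
   Context: $\mathcal P(O)$ denotes Borel probability measures on $O$; $\mathcal P_2(\mathbb R^d)$ those on $\mathbb R^d$ with finite second moment; $f_\#m$ is the image measure. For $\mu$ a probability measure on $\mathbb R^d$, $T_\mu(\mathcal P_2(\mathbb R^d))$ is the set of measurable maps $\psi:\mathbb R^d\to\mathcal P(\mathbb R^d)$, $x\mapsto\psi_x$, with $\int\int|z|^2\psi_x(dz)\mu(dx)<\infty$; such $\psi$ is identified with the measure $\mu(dx)\psi_x(dz)$ on $\mathbb R^{2d}$. For $t\in[0,1]$, $e_t$ is the evaluation map $w\mapsto w(t)$ on spaces of continuous curves. $\pi_1,\pi_2$ are the projections of $\mathbb R^d\times\mathbb R^d$. Let $p_1:C([0,1],\mathbb R^{2d})\to C([0,1],\mathbb R^d)$, $p_1(w)(t)=\pi_1(w(t))$; let $C^1_y([0,1],\mathbb R^{2d})$ be the set of continuous curves $w$ such that $t\mapsto\pi_2(w(t))$ is $C^1$, and on it $\partial_2(w)(t)=\frac{d}{dt}\pi_2(w(t))$. Given $\mu\in\mathcal P_2(\mathbb R^d)$, $\psi\in T_\mu(\mathcal P_2(\mathbb R^d))$ and $\eta\in\mathcal P(C([0,1],\mathbb R^d))$ with $(e_0)_\#\eta=\mu$, a parallel transport of $\psi$ along $\eta$ is a probability measure $\Psi$ on $C([0,1],\mathbb R^{2d})$ concentrated on $C^1_y([0,1],\mathbb R^{2d})$ such that $(p_1)_\#\Psi=\eta$, $(\partial_2)_\#\Psi=\delta_0$ (Dirac mass at the zero curve), and $(e_0)_\#\Psi(dx,dz)=\mu(dx)\psi_x(dz)$.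 *)

theory Defs
  imports "HOL-Probability.Probability"
begin

text \<open>Continuous curves on [0,1], represented extensionally as functions on the reals
  that vanish outside [0,1].\<close>
definition C01 :: "(real \<Rightarrow> 'b::real_normed_vector) set" where
  "C01 = {w. continuous_on {0..1} w \<and> (\<forall>t. t \<notin> {0..1} \<longrightarrow> w t = 0)}"

text \<open>The Borel sigma-algebra of C([0,1],E) for the sup norm; for Euclidean E it coincides
  with the sigma-algebra generated by the evaluation maps, which is what we use.\<close>
definition curves :: "(real \<Rightarrow> 'b::real_normed_vector) measure" where
  "curves = sigma C01 {(\<lambda>w. w t) -` B \<inter> C01 | t B. t \<in> {0..1} \<and> B \<in> sets borel}"

definition ev :: "real \<Rightarrow> (real \<Rightarrow> 'b) \<Rightarrow> 'b" where
  "ev t w = w t"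

definition p1 :: "(real \<Rightarrow> 'a \<times> 'b) \<Rightarrow> real \<Rightarrow> 'a" where
  "p1 w = (\<lambda>t. fst (w t))"

definition C1y :: "(real \<Rightarrow> 'a::real_normed_vector \<times> 'b::real_normed_vector) set" where
  "C1y = {w \<in> C01. \<exists>D. continuous_on {0..1} D \<and>
            (\<forall>t\<in>{0..1}. ((\<lambda>s. snd (w s)) has_vector_derivative D t) (at t within {0..1}))}"

text \<open>\<partial>_2 : derivative of the second component (set to the zero curve off C^1_y,
  where it is not defined in the paper; irrelevant since Psi is concentrated on C^1_y).\<close>
definition d2 :: "(real \<Rightarrow> 'a::real_normed_vector \<times> 'b::real_normed_vector) \<Rightarrow> real \<Rightarrow> 'b" where
  "d2 w = (if w \<in> C1y then
             (\<lambda>t. if t \<in> {0..1} then vector_derivative (\<lambda>s. snd (w s)) (at t within {0..1}) else 0)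
           else (\<lambda>_. 0))"

definition P2 :: "'a::euclidean_space measure set" where
  "P2 = {\<mu> \<in> space (prob_algebra borel). (\<integral>\<^sup>+x. ennreal (norm x ^ 2) \<partial>\<mu>) < \<infinity>}"

definition Tan :: "'a::euclidean_space measure \<Rightarrow> ('a \<Rightarrow> 'a measure) set" where
  "Tan \<mu> = {\<psi>. \<psi> \<in> borel \<rightarrow>\<^sub>M prob_algebra borel \<and>
              (\<integral>\<^sup>+x. (\<integral>\<^sup>+z. ennreal (norm z ^ 2) \<partial>(\<psi> x)) \<partial>\<mu>) < \<infinity>}"

definition plan :: "'a::euclidean_space measure \<Rightarrow> ('a \<Rightarrow> 'a measure) \<Rightarrow> ('a \<times> 'a) measure" where
  "plan \<mu> \<psi> = \<mu> \<bind> (\<lambda>x. distr (\<psi> x) borel (\<lambda>z. (x, z)))"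

definition parallel_transport ::
  "'a::euclidean_space measure \<Rightarrow> ('a \<Rightarrow> 'a measure) \<Rightarrow> (real \<Rightarrow> 'a) measure
     \<Rightarrow> (real \<Rightarrow> 'a \<times> 'a) measure \<Rightarrow> bool" where
  "parallel_transport \<mu> \<psi> \<eta> \<Psi> \<longleftrightarrow>
     \<Psi> \<in> space (prob_algebra curves) \<and>
     C1y \<in> sets \<Psi> \<and> emeasure \<Psi> C1y = 1 \<and>
     distr \<Psi> curves p1 = \<eta> \<and>
     distr \<Psi> curves d2 = return curves (\<lambda>_. 0) \<and>
     distr \<Psi> borel (ev 0) = plan \<mu> \<psi>"

end

theory Submission
  imports Defs
begin

text \<open>
  Since \<open>p\<^sub>1\<close> pushes \<open>\<Psi>\<close> to \<open>\<eta>\<close>, the law of \<open>w(t)\<close> under \<open>\<Psi>\<close> is a probability measure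
  on \<open>\<real>\<^sup>d \<times> \<real>\<^sup>d\<close> with first marginal \<open>(e\<^sub>t)\<^sub>#\<eta>\<close>; disintegrating it along this marginal
  yields the kernel \<open>\<psi>\<^sub>t\<close>. Disintegration is first obtained for a real second factor, from
  conditional distribution functions built as Radon-Nikodym derivatives at rational thresholds,
  and then transferred to \<open>\<real>\<^sup>d\<close> through a Borel injection \<open>\<real>\<^sup>d \<rightarrow> \<real>\<close> with Borel left
  inverse, obtained by interleaving binary digits.

  The second moment of \<open>\<psi>\<^sub>t\<close> is finite because \<open>\<Psi>\<close>-almost every curve has a constant
  second component: the derivative of that component vanishes at all rational times almost
  surely, hence everywhere by continuity. So the second moment at time \<open>t\<close> equals the one
  of \<open>\<psi>\<close> at time \<open>0\<close>.
\<close>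

section \<open>Digit expansions and a Borel embedding of Euclidean space into the reals\<close>

definition digit :: "nat \<Rightarrow> nat \<Rightarrow> real \<Rightarrow> real" where
  "digit b k s = of_int \<lfloor>real b ^ Suc k * s\<rfloor> - real b * of_int \<lfloor>real b ^ k * s\<rfloor>"

lemma measurable_digit [measurable]: "digit b k \<in> borel_measurable borel"
  unfolding digit_def by measurable

lemma digit_Ints: "digit b k s \<in> \<int>"
  unfolding digit_def by simp

lemma digit_bounds:
  assumes "0 < b"
  shows "0 \<le> digit b k s" and "digit b k s \<le> real b - 1"
proof -
  define y where "y = real b ^ k * s"
  have digit_eq: "digit b k s = of_int (\<lfloor>real b * y\<rfloor> - int b * \<lfloor>y\<rfloor>)"
    by (simp add: digit_def y_def mult.assoc)
  have "int b * \<lfloor>y\<rfloor> \<le> \<lfloor>real b * y\<rfloor>"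
    unfolding le_floor_iff using assms by (simp add: mult_left_mono)
  moreover have "\<lfloor>real b * y\<rfloor> < int b * \<lfloor>y\<rfloor> + int b"
    unfolding floor_less_iff
    using mult_strict_left_mono[OF real_of_int_floor_add_one_gt[of y], of "real b"] assms
    by (simp add: algebra_simps)
  ultimately show "0 \<le> digit b k s" and "digit b k s \<le> real b - 1"
    unfolding digit_eq by linarith+
qed

lemma sum_digit:
  assumes "0 < b"
  shows "(\<Sum>k<N. digit b k s / real b ^ Suc k) = of_int \<lfloor>real b ^ N * s\<rfloor> / real b ^ N - of_int \<lfloor>s\<rfloor>"
proof (induction N)
  case (Suc N)
  have "digit b N s / real b ^ Suc N
      = of_int \<lfloor>real b ^ Suc N * s\<rfloor> / real b ^ Suc N - of_int \<lfloor>real b ^ N * s\<rfloor> / real b ^ N"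
    unfolding digit_def using assms by (simp add: diff_divide_distrib)
  with Suc.IH show ?case
    by simp
qed simp

lemma LIMSEQ_floor_scaled:
  assumes "1 < b"
  shows "(\<lambda>N. of_int \<lfloor>b ^ N * s\<rfloor> / b ^ N) \<longlonglongrightarrow> (s::real)"
proof (rule tendsto_sandwich[of "\<lambda>N. s - (1 / b) ^ N" _ _ "\<lambda>N. s"])
  have "s - (1 / b) ^ N \<le> of_int \<lfloor>b ^ N * s\<rfloor> / b ^ N" for N
  proof -
    have "b ^ N * s - 1 \<le> of_int \<lfloor>b ^ N * s\<rfloor>"
      by linarith
    then have "(b ^ N * s - 1) / b ^ N \<le> of_int \<lfloor>b ^ N * s\<rfloor> / b ^ N"
      using assms by (simp add: divide_right_mono)
    then show ?thesis
      using assms by (simp add: power_one_over diff_divide_distrib)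
  qed
  then show "\<forall>\<^sub>F N in sequentially. s - (1 / b) ^ N \<le> of_int \<lfloor>b ^ N * s\<rfloor> / b ^ N"
    by simp
  have "of_int \<lfloor>b ^ N * s\<rfloor> / b ^ N \<le> s" for N
    using assms by (simp add: pos_divide_le_eq mult.commute)
  then show "\<forall>\<^sub>F N in sequentially. of_int \<lfloor>b ^ N * s\<rfloor> / b ^ N \<le> s"
    by simp
  show "(\<lambda>N. s - (1 / b) ^ N) \<longlonglongrightarrow> s"
    using assms by (intro tendsto_eq_intros LIMSEQ_power_zero) auto
qed simp

lemma sums_digit:
  assumes "1 < b" and "s \<in> {0..<1}"
  shows "(\<lambda>k. digit b k s / real b ^ Suc k) sums s"
proof -
  have "\<lfloor>s\<rfloor> = 0"
    using assms(2) by (simp add: floor_eq_iff)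
  then show ?thesis
    unfolding sums_def sum_digit[OF order.strict_trans[OF zero_less_one assms(1)]]
    using LIMSEQ_floor_scaled[of "real b" s] assms(1) by simp
qed

lemma sums_inverse_power_Suc:
  assumes "1 < (b::real)"
  shows "(\<lambda>i. 1 / b ^ Suc i) sums (1 / (b - 1))"
proof -
  have "(\<lambda>i. (1 / b) ^ i / b) sums (1 / (1 - 1 / b) / b)"
    using assms by (intro sums_divide geometric_sums) simp
  moreover have "1 / (1 - 1 / b) / b = 1 / (b - 1)"
    using assms by (simp add: field_simps)
  ultimately show ?thesis
    by (simp add: power_one_over mult.commute)
qed

lemma floor_scaled_suminf_digits:
  assumes b: "2 \<le> b" and c: "\<And>m. c m \<in> \<int>" "\<And>m. 0 \<le> c m" "\<And>m. c m \<le> real b - 2"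
  shows "of_int \<lfloor>real b ^ n * (\<Sum>m. c m / real b ^ Suc m)\<rfloor> =
    real b ^ n * (\<Sum>m<n. c m / real b ^ Suc m)" (is "_ = ?P n")
proof -
  have geom: "(\<lambda>i. 1 / real b ^ Suc i) sums (1 / (real b - 1))"
    using b by (intro sums_inverse_power_Suc) simp
  have summable_shift: "summable (\<lambda>i. c (i + k) / real b ^ Suc i)" for k
  proof (rule summable_comparison_test'[OF sums_summable[OF sums_mult[OF geom]], of 0])
    show "norm (c (i + k) / real b ^ Suc i) \<le> (real b - 2) * (1 / real b ^ Suc i)" for i
      using c(2,3)[of "i + k"] by (simp add: divide_right_mono)
  qed
  have "?P n \<in> \<int>"
  proof (induction n)
    case (Suc n)
    have "?P (Suc n) = real b * ?P n + c n"
      using b by (simp add: field_simps)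
    with Suc.IH show ?case
      by (simp add: c(1))
  qed simp
  then obtain z where z: "?P n = of_int z"
    by (auto elim: Ints_cases)
  have "real b ^ n * (\<Sum>m. c m / real b ^ Suc m) - ?P n =
      real b ^ n * (\<Sum>i. c (i + n) / real b ^ Suc (i + n))"
    using suminf_split_initial_segment[OF summable_shift[of 0], of n] by (simp add: algebra_simps)
  also have "(\<lambda>i. c (i + n) / real b ^ Suc (i + n)) = (\<lambda>i. c (i + n) / real b ^ Suc i / real b ^ n)"
    using b by (auto simp: power_add field_simps)
  also have "real b ^ n * (\<Sum>i. c (i + n) / real b ^ Suc i / real b ^ n) =
      (\<Sum>i. c (i + n) / real b ^ Suc i)"
    unfolding suminf_divide[OF summable_shift[of n]] using b by simp
  finally have tail:
    "real b ^ n * (\<Sum>m. c m / real b ^ Suc m) - ?P n = (\<Sum>i. c (i + n) / real b ^ Suc i)" .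
  have "(\<Sum>i. c (i + n) / real b ^ Suc i) \<le> (\<Sum>i. (real b - 2) * (1 / real b ^ Suc i))"
    using b c summable_shift[of n] sums_summable[OF sums_mult[OF geom]]
    by (intro suminf_le) (auto intro!: divide_right_mono)
  also have "\<dots> = (real b - 2) / (real b - 1)"
    using sums_unique[OF sums_mult[OF geom, of "real b - 2"]] by simp
  also have "\<dots> < 1"
    using b by simp
  finally have "real b ^ n * (\<Sum>m. c m / real b ^ Suc m) - ?P n < 1"
    unfolding tail .
  moreover have "0 \<le> real b ^ n * (\<Sum>m. c m / real b ^ Suc m) - ?P n"
    unfolding tail using c(2) by (intro suminf_nonneg summable_shift) simp
  ultimately show ?thesis
    unfolding z by (simp add: floor_eq_iff)
qed

lemma suminf_digit_expansion:
  assumes "2 \<le> b" and "\<And>m. c m \<in> \<int>" "\<And>m. 0 \<le> c m" "\<And>m. c m \<le> real b - 2"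
  shows "digit b n (\<Sum>m. c m / real b ^ Suc m) = c n"
  using assms unfolding digit_def floor_scaled_suminf_digits[OF assms] by (simp add: field_simps)

definition squash :: "real \<Rightarrow> real" where
  "squash r = arctan r / pi + 1 / 2"

definition unsquash :: "real \<Rightarrow> real" where
  "unsquash s = tan (pi * (s - 1 / 2))"

lemma squash_range: "squash r \<in> {0..<1}"
  using arctan_bounded[of r] pi_gt_zero unfolding squash_def by (auto simp: field_simps)

lemma unsquash_squash: "unsquash (squash r) = r"
  unfolding squash_def unsquash_def by (simp add: tan_arctan)

lemma measurable_squash [measurable]: "squash \<in> borel_measurable borel"
  unfolding squash_def by measurable

lemma measurable_unsquash [measurable]: "unsquash \<in> borel_measurable borel"
  unfolding unsquash_def tan_def
  by (intro borel_measurable_divide borel_measurable_continuous_onI continuous_intros)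

definition basis_enum :: "nat \<Rightarrow> 'a::euclidean_space" where
  "basis_enum = (SOME f. bij_betw f {..<DIM('a)} Basis)"

lemma bij_betw_basis_enum: "bij_betw (basis_enum :: nat \<Rightarrow> 'a::euclidean_space) {..<DIM('a)} Basis"
  unfolding basis_enum_def
  using ex_bij_betw_nat_finite[OF finite_Basis] unfolding atLeast0LessThan by (rule someI_ex)

text \<open>The binary digits of the squashed coordinates are interleaved and read as base-4 digits.
  Base 4 leaves a gap between the possible digit values, so, unlike a binary expansion, the
  resulting number determines its digits and the coordinates can be read off again.\<close>
definition euclidean_code :: "'a::euclidean_space \<Rightarrow> real" where
  "euclidean_code x =
     (\<Sum>n. digit 2 (n div DIM('a)) (squash (x \<bullet> basis_enum (n mod DIM('a)))) / 4 ^ Suc n)"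

definition euclidean_decode :: "real \<Rightarrow> 'a::euclidean_space" where
  "euclidean_decode y =
     (\<Sum>j<DIM('a). unsquash (\<Sum>k. digit 4 (k * DIM('a) + j) y / 2 ^ Suc k) *\<^sub>R basis_enum j)"

lemma measurable_euclidean_code [measurable]:
  "(euclidean_code :: 'a::euclidean_space \<Rightarrow> real) \<in> borel_measurable borel"
  unfolding euclidean_code_def by measurable

lemma measurable_euclidean_decode [measurable]:
  "(euclidean_decode :: real \<Rightarrow> 'a::euclidean_space) \<in> borel_measurable borel"
  unfolding euclidean_decode_def by measurable

lemma digit_euclidean_code:
  assumes "j < DIM('a)"
  shows "digit 4 (k * DIM('a) + j) (euclidean_code (x::'a::euclidean_space)) =
    digit 2 k (squash (x \<bullet> basis_enum j))"
proof -
  let ?c = "\<lambda>n. digit 2 (n div DIM('a)) (squash (x \<bullet> (basis_enum (n mod DIM('a)) :: 'a)))"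
  have "digit 4 (k * DIM('a) + j) (\<Sum>n. ?c n / real 4 ^ Suc n) = ?c (k * DIM('a) + j)"
    by (rule suminf_digit_expansion[of 4 ?c])
      (simp_all add: digit_Ints digit_bounds(1) order.trans[OF digit_bounds(2)])
  moreover have "(k * DIM('a) + j) div DIM('a) = k" "(k * DIM('a) + j) mod DIM('a) = j"
    using assms by simp_all
  ultimately show ?thesis
    unfolding euclidean_code_def by simp
qed

lemma euclidean_decode_code: "euclidean_decode (euclidean_code x) = (x :: 'a::euclidean_space)"
proof -
  have coord:
    "(\<Sum>k. digit 4 (k * DIM('a) + j) (euclidean_code x) / 2 ^ Suc k) = squash (x \<bullet> basis_enum j)"
    if "j < DIM('a)" for j
    using sums_unique[OF sums_digit[of 2, OF _ squash_range], symmetric]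
    by (simp add: digit_euclidean_code[OF that])
  have "euclidean_decode (euclidean_code x) =
      (\<Sum>j<DIM('a). (x \<bullet> basis_enum j) *\<^sub>R (basis_enum j :: 'a))"
    unfolding euclidean_decode_def
    by (rule sum.cong[OF refl]) (simp only: lessThan_iff coord unsquash_squash)
  also have "\<dots> = (\<Sum>b\<in>Basis. (x \<bullet> b) *\<^sub>R b)"
    by (rule sum.reindex_bij_betw[OF bij_betw_basis_enum])
  also have "\<dots> = x"
    by (rule euclidean_representation)
  finally show ?thesis .
qed

section \<open>Disintegration of probability measures on products\<close>

lemma measurable_fst_borel [measurable]:
  "fst \<in> (borel :: ('a::topological_space \<times> 'b::topological_space) measure) \<rightarrow>\<^sub>M borel"
  by (rule borel_measurable_continuous_onI) (intro continuous_intros)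

lemma measurable_snd_borel [measurable]:
  "snd \<in> (borel :: ('a::topological_space \<times> 'b::topological_space) measure) \<rightarrow>\<^sub>M borel"
  by (rule borel_measurable_continuous_onI) (intro continuous_intros)

lemma measurable_Pair_borel:
  "Pair x \<in> (borel :: 'b::second_countable_topology measure) \<rightarrow>\<^sub>M
     (borel :: ('a::second_countable_topology \<times> 'b) measure)"
  by measurable

lemma measurable_pair_measure_borel:
  "(\<lambda>(x, y). (x, y)) \<in>
     (borel :: 'a::second_countable_topology measure) \<Otimes>\<^sub>M
     (borel :: 'b::second_countable_topology measure) \<rightarrow>\<^sub>M borel"
  by (simp add: borel_prod case_prod_beta)

lemma AE_le_of_set_nn_integral_le:
  assumes [measurable]: "f \<in> borel_measurable M" "g \<in> borel_measurable M"
    and le: "\<And>A. A \<in> sets M \<Longrightarrow> (\<integral>\<^sup>+x. f x * indicator A x \<partial>M) \<le> (\<integral>\<^sup>+x. g x * indicator A x \<partial>M)"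
    and finite: "integral\<^sup>N M g \<noteq> \<infinity>"
  shows "AE x in M. f x \<le> g x"
proof -
  define N where "N = {x \<in> space M. g x < f x}"
  have [measurable]: "N \<in> sets M"
    unfolding N_def by measurable
  have "(\<integral>\<^sup>+x. g x * indicator N x \<partial>M) \<le> integral\<^sup>N M g"
    by (intro nn_integral_mono) (auto split: split_indicator)
  then have g_finite: "(\<integral>\<^sup>+x. g x * indicator N x \<partial>M) \<noteq> \<infinity>"
    using finite by (auto simp: top_unique)
  then have f_finite: "(\<integral>\<^sup>+x. f x * indicator N x \<partial>M) \<noteq> \<infinity>"
    using le[of N] by (auto simp: top_unique)
  have "(\<integral>\<^sup>+x. (f x - g x) * indicator N x \<partial>M)
      = (\<integral>\<^sup>+x. f x * indicator N x - g x * indicator N x \<partial>M)"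
    by (auto intro!: nn_integral_cong simp: indicator_def)
  also have "\<dots> = (\<integral>\<^sup>+x. f x * indicator N x \<partial>M) - (\<integral>\<^sup>+x. g x * indicator N x \<partial>M)"
    using g_finite by (intro nn_integral_diff) (auto simp: N_def split: split_indicator)
  also have "\<dots> = 0"
    using le[of N] f_finite by (simp add: diff_eq_0_iff_ennreal less_top)
  finally have "AE x in M. (f x - g x) * indicator N x = 0"
    by (subst (asm) nn_integral_0_iff_AE) auto
  then show ?thesis
    using AE_space by eventually_elim
      (auto simp: N_def ennreal_minus_eq_0 not_less split: split_indicator split_indicator_asm)
qed

definition dyadic_above :: "real \<Rightarrow> nat \<Rightarrow> real" where
  "dyadic_above r n = (of_int \<lfloor>2 ^ n * r\<rfloor> + 1) / 2 ^ n"

lemma dyadic_above_Rats: "dyadic_above r n \<in> \<rat>"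
  unfolding dyadic_above_def by simp

lemma dyadic_above_gt: "r < dyadic_above r n"
proof -
  have "2 ^ n * r < of_int \<lfloor>2 ^ n * r\<rfloor> + 1"
    by linarith
  then show ?thesis
    unfolding dyadic_above_def by (simp add: pos_less_divide_eq mult.commute)
qed

lemma dyadic_above_le: "dyadic_above r n \<le> r + 1 / 2 ^ n"
proof -
  have "of_int \<lfloor>2 ^ n * r\<rfloor> + 1 \<le> 2 ^ n * r + 1"
    by linarith
  then show ?thesis
    unfolding dyadic_above_def by (simp add: pos_divide_le_eq algebra_simps)
qed

lemma decseq_dyadic_above: "decseq (dyadic_above r)"
proof (rule decseq_SucI)
  fix n
  have "of_int \<lfloor>2 ^ Suc n * r\<rfloor> + 1 \<le> 2 * (of_int \<lfloor>2 ^ n * r\<rfloor> + 1 :: real)"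
    using digit_bounds(2)[of 2 n r] by (simp add: digit_def)
  then have "dyadic_above r (Suc n) \<le> 2 * (of_int \<lfloor>2 ^ n * r\<rfloor> + 1) / 2 ^ Suc n"
    unfolding dyadic_above_def by (rule divide_right_mono) simp
  also have "\<dots> = dyadic_above r n"
    unfolding dyadic_above_def power_Suc by (rule mult_divide_mult_cancel_left) simp
  finally show "dyadic_above r (Suc n) \<le> dyadic_above r n" .
qed

lemma dyadic_above_less:
  assumes "r < q"
  obtains n where "dyadic_above r n < q"
proof -
  obtain n where "(1 / 2) ^ n < q - r"
    using real_arch_pow_inv[of "q - r" "1 / 2"] assms by auto
  then have "dyadic_above r n < q"
    using dyadic_above_le[of r n] unfolding power_one_over by linarith
  then show ?thesis
    by (rule that)
qed

lemma INT_atMost_dyadic_above: "(\<Inter>n. {..dyadic_above r n}) = {..r}"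
proof (intro equalityI subsetI)
  fix s assume s: "s \<in> (\<Inter>n. {..dyadic_above r n})"
  show "s \<in> {..r}"
  proof (rule ccontr)
    assume "s \<notin> {..r}"
    then obtain n where "dyadic_above r n < s"
      using dyadic_above_less[of r s] by auto
    moreover have "s \<le> dyadic_above r n"
      using s by blast
    ultimately show False
      by simp
  qed
next
  fix s assume "s \<in> {..r}"
  then have "s \<le> dyadic_above r n" for n
    using dyadic_above_gt[of r n] by simp
  then show "s \<in> (\<Inter>n. {..dyadic_above r n})"
    by simp
qed

lemma sets_borel_prod_eq_sigma_times_atMost:
  "sets (borel :: ('a::second_countable_topology \<times> real) measure) =
     sigma_sets UNIV {A \<times> {..r} | A r. A \<in> sets borel}"
proof -
  have "sets (borel :: ('a \<times> real) measure) =
      sets (sigma UNIV (sets (borel :: 'a measure)) \<Otimes>\<^sub>M sigma UNIV (range (atMost :: real \<Rightarrow> real set)))"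
    unfolding borel_prod[symmetric]
    by (intro sets_pair_measure_cong)
      (simp_all add: borel_eq_atMost sets.sigma_sets_eq[of borel, simplified])
  also have "\<dots> = sets (sigma UNIV {A \<times> B | A B. A \<in> sets borel \<and> B \<in> range atMost})"
  proof (subst sigma_prod)
    show "\<exists>E\<subseteq>range (atMost :: real \<Rightarrow> real set). countable E \<and> UNIV = \<Union>E"
      by (intro exI[of _ "range (\<lambda>n::nat. {..real n})"]) (auto simp: real_arch_simple)
  qed (auto intro!: exI[of _ "{UNIV}"])
  also have "{A \<times> B | A B. A \<in> sets borel \<and> B \<in> range atMost} =
      {A \<times> {..r} | A r. A \<in> sets (borel :: 'a measure)}"
    by blast
  finally show ?thesis
    by (simp add: sets_measure_of_conv)
qed

locale prob_on_prod_real = prob_space \<nu>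
  for \<nu> :: "('a::second_countable_topology \<times> real) measure" +
  assumes sets_eq_borel [measurable_cong]: "sets \<nu> = sets borel"
begin

lemma space_eq_UNIV: "space \<nu> = UNIV"
  using sets_eq_imp_space_eq[OF sets_eq_borel] by simp

lemma times_in_sets [measurable]:
  assumes "A \<in> sets borel" and "B \<in> sets borel"
  shows "A \<times> B \<in> sets \<nu>"
  using pair_measureI[OF assms] unfolding borel_prod sets_eq_borel .

definition marginal :: "'a measure" where
  "marginal = distr \<nu> borel fst"

lemma sets_marginal [measurable_cong]: "sets marginal = sets borel"
  by (simp add: marginal_def)

lemma space_marginal: "space marginal = UNIV"
  by (simp add: marginal_def)

lemma prob_space_marginal: "prob_space marginal"
  unfolding marginal_def by (rule prob_space_distr) measurable

lemma emeasure_marginal: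
  assumes "A \<in> sets borel"
  shows "emeasure marginal A = emeasure \<nu> (A \<times> UNIV)"
proof -
  have "fst -` A \<inter> space \<nu> = A \<times> UNIV"
    by (auto simp: space_eq_UNIV)
  with assms show ?thesis
    unfolding marginal_def by (subst emeasure_distr) auto
qed

definition cdf_density :: "real \<Rightarrow> 'a \<Rightarrow> ennreal" where
  "cdf_density r = RN_deriv marginal (distr (density \<nu> (indicator (UNIV \<times> {..r}))) borel fst)"

lemma measurable_cdf_density [measurable]: "cdf_density r \<in> borel_measurable borel"
  using borel_measurable_RN_deriv[of marginal] unfolding cdf_density_def
  by (simp add: measurable_cong_sets[OF sets_marginal refl])

lemma emeasure_times_atMost:
  assumes [measurable]: "A \<in> sets borel"
  shows "emeasure \<nu> (A \<times> {..r}) = (\<integral>\<^sup>+x. cdf_density r x * indicator A x \<partial>marginal)"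
proof -
  interpret marginal: prob_space marginal
    by (rule prob_space_marginal)
  define N where "N = distr (density \<nu> (indicator (UNIV \<times> {..r}))) (borel :: 'a measure) fst"
  have emeasure_N: "emeasure N B = emeasure \<nu> (B \<times> {..r})" if [measurable]: "B \<in> sets borel" for B
  proof -
    have "emeasure N B = (\<integral>\<^sup>+p. indicator (UNIV \<times> {..r}) p * indicator (fst -` B \<inter> space \<nu>) p \<partial>\<nu>)"
      unfolding N_def by (simp add: emeasure_distr emeasure_density)
    also have "\<dots> = (\<integral>\<^sup>+p. indicator (B \<times> {..r}) p \<partial>\<nu>)"
      by (intro nn_integral_cong) (auto simp: space_eq_UNIV split: split_indicator)
    also have "\<dots> = emeasure \<nu> (B \<times> {..r})"
      by simp
    finally show ?thesis .
  qed
  have "absolutely_continuous marginal N"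
    unfolding absolutely_continuous_def
  proof
    fix B assume B: "B \<in> null_sets marginal"
    then have [measurable]: "B \<in> sets borel"
      by (simp add: null_sets_def sets_marginal)
    have "emeasure N B \<le> emeasure \<nu> (B \<times> UNIV)"
      unfolding emeasure_N[OF \<open>B \<in> sets borel\<close>] by (intro emeasure_mono) auto
    also have "\<dots> = 0"
      using null_setsD1[OF B] emeasure_marginal[of B] by simp
    finally show "B \<in> null_sets N"
      by (simp add: null_sets_def N_def)
  qed
  then have "density marginal (cdf_density r) = N"
    unfolding cdf_density_def N_def[symmetric]
    by (rule marginal.density_RN_deriv) (simp add: N_def sets_marginal)
  then have "emeasure \<nu> (A \<times> {..r}) = emeasure (density marginal (cdf_density r)) A"
    using emeasure_N[OF assms] by simp
  also have "\<dots> = (\<integral>\<^sup>+x. cdf_density r x * indicator A x \<partial>marginal)"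
    by (rule emeasure_density) measurable
  finally show ?thesis .
qed

lemma nn_integral_cdf_density_finite: "integral\<^sup>N marginal (cdf_density r) \<noteq> \<infinity>"
proof -
  have "integral\<^sup>N marginal (cdf_density r) = emeasure \<nu> (UNIV \<times> {..r})"
    using emeasure_times_atMost[of UNIV r] by simp
  then show ?thesis
    using emeasure_finite by simp
qed

lemma AE_cdf_density_mono:
  assumes "q \<le> r"
  shows "AE x in marginal. cdf_density q x \<le> cdf_density r x"
proof (rule AE_le_of_set_nn_integral_le)
  fix A assume "A \<in> sets marginal"
  then have [measurable]: "A \<in> sets borel"
    by (simp add: sets_marginal)
  have "emeasure \<nu> (A \<times> {..q}) \<le> emeasure \<nu> (A \<times> {..r})"
    using assms by (intro emeasure_mono) auto
  then show "(\<integral>\<^sup>+x. cdf_density q x * indicator A x \<partial>marginal) \<le>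
      (\<integral>\<^sup>+x. cdf_density r x * indicator A x \<partial>marginal)"
    by (simp add: emeasure_times_atMost)
qed (use nn_integral_cdf_density_finite in simp_all)

lemma AE_cdf_density_le_1: "AE x in marginal. cdf_density r x \<le> 1"
proof (rule AE_le_of_set_nn_integral_le)
  fix A assume "A \<in> sets marginal"
  then have [measurable]: "A \<in> sets borel"
    by (simp add: sets_marginal)
  have "emeasure \<nu> (A \<times> {..r}) \<le> emeasure \<nu> (A \<times> UNIV)"
    by (intro emeasure_mono) auto
  then show "(\<integral>\<^sup>+x. cdf_density r x * indicator A x \<partial>marginal) \<le> (\<integral>\<^sup>+x. 1 * indicator A x \<partial>marginal)"
    by (simp add: emeasure_times_atMost emeasure_marginal)
qed (simp_all add: prob_space.emeasure_space_1[OF prob_space_marginal])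

lemma AE_SUP_cdf_density: "AE x in marginal. (SUP n::nat. cdf_density (real n) x) = 1"
proof -
  interpret marginal: prob_space marginal
    by (rule prob_space_marginal)
  define H where "H x = (SUP n::nat. cdf_density (real n) x)" for x
  have [measurable]: "H \<in> borel_measurable borel"
    unfolding H_def by measurable
  have "emeasure (density marginal H) A = emeasure (density marginal (\<lambda>_. 1)) A"
    if A [measurable]: "A \<in> sets borel" for A
  proof -
    have "emeasure (density marginal H) A =
        (\<integral>\<^sup>+x. (SUP n::nat. cdf_density (real n) x * indicator A x) \<partial>marginal)"
      unfolding H_def by (simp add: emeasure_density SUP_mult_right_ennreal)
    also have "\<dots> = (SUP n::nat. \<integral>\<^sup>+x. cdf_density (real n) x * indicator A x \<partial>marginal)"
    proof (rule nn_integral_monotone_convergence_SUP_AE)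
      fix n :: nat
      have "AE x in marginal. cdf_density (real n) x \<le> cdf_density (real (Suc n)) x"
        by (rule AE_cdf_density_mono) simp
      then show "AE x in marginal.
          cdf_density (real n) x * indicator A x \<le> cdf_density (real (Suc n)) x * indicator A x"
        by eventually_elim (auto intro: mult_right_mono)
    qed measurable
    also have "\<dots> = (SUP n::nat. emeasure \<nu> (A \<times> {..real n}))"
      by (simp add: emeasure_times_atMost)
    also have "\<dots> = emeasure \<nu> (\<Union>n::nat. A \<times> {..real n})"
      by (rule SUP_emeasure_incseq) (auto simp: incseq_def)
    also have "(\<Union>n::nat. A \<times> {..real n}) = A \<times> UNIV"
      by (auto simp: real_arch_simple)
    finally show ?thesis
      by (simp add: emeasure_density emeasure_marginal)
  qed
  then have "density marginal H = density marginal (\<lambda>_. 1)"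
    by (intro measure_eqI) (simp_all add: sets_marginal)
  then have "AE x in marginal. H x = 1"
    by (rule marginal.density_unique[rotated 2]) simp_all
  then show ?thesis
    by (simp add: H_def)
qed

lemma AE_INF_cdf_density: "AE x in marginal. (INF n::nat. cdf_density (- real n) x) = 0"
proof -
  have "(\<integral>\<^sup>+x. (INF n::nat. cdf_density (- real n) x) \<partial>marginal) =
      (INF n::nat. integral\<^sup>N marginal (cdf_density (- real n)))"
  proof (rule nn_integral_monotone_convergence_INF_AE')
    show "AE x in marginal. cdf_density (- real (Suc n)) x \<le> cdf_density (- real n) x" for n
      by (rule AE_cdf_density_mono) simp
    show "(\<integral>\<^sup>+x. cdf_density (- real 0) x \<partial>marginal) < \<infinity>"
      using nn_integral_cdf_density_finite by (simp add: less_top)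
  qed measurable
  also have "\<dots> = (INF n::nat. emeasure \<nu> (UNIV \<times> {..- real n}))"
    using emeasure_times_atMost[of UNIV] by simp
  also have "\<dots> = emeasure \<nu> (\<Inter>n::nat. UNIV \<times> {..- real n})"
    by (rule INF_emeasure_decseq) (auto simp: decseq_def)
  also have "(\<Inter>n::nat. UNIV \<times> {..- real n}) = {}"
  proof -
    have "\<exists>n::nat. - real n < b" for b :: real
      using reals_Archimedean2[of "- b"] by (metis minus_less_iff)
    then show ?thesis
      by (auto simp: not_le[symmetric])
  qed
  finally have "(\<integral>\<^sup>+x. (INF n::nat. cdf_density (- real n) x) \<partial>marginal) = 0"
    by simp
  then show ?thesis
    by (subst (asm) nn_integral_0_iff_AE) measurable
qed

text \<open>Each \<open>cdf_density r\<close> is a version of the conditional probability of \<open>{..r}\<close> given the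
  first coordinate, controlled only almost everywhere. Restricting to the countably many
  rational thresholds and regularising from the right gives, for every \<open>x\<close> in the full-measure
  set \<open>regular\<close>, a genuine distribution function \<open>cond_cdf x\<close>.\<close>
definition regular :: "'a set" where
  "regular = {x. (\<forall>q\<in>\<rat>. \<forall>r\<in>\<rat>. q \<le> r \<longrightarrow> cdf_density q x \<le> cdf_density r x) \<and>
                 (\<forall>q\<in>\<rat>. cdf_density q x \<le> 1) \<and>
                 (SUP n::nat. cdf_density (real n) x) = 1 \<and>
                 (INF n::nat. cdf_density (- real n) x) = 0}"

lemma sets_regular [measurable]: "regular \<in> sets borel"
proof -
  have "regular = {x. (\<forall>q r::rat. of_rat q \<le> (of_rat r :: real) \<longrightarrow>
                              cdf_density (of_rat q) x \<le> cdf_density (of_rat r) x) \<and>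
                      (\<forall>q::rat. cdf_density (of_rat q) x \<le> 1) \<and>
                      (SUP n::nat. cdf_density (real n) x) = 1 \<and>
                      (INF n::nat. cdf_density (- real n) x) = 0}"
    unfolding regular_def Rats_def by auto
  also have "\<dots> \<in> sets borel"
    by measurable
  finally show ?thesis .
qed

lemma AE_regular: "AE x in marginal. x \<in> regular"
proof -
  have "AE x in marginal. \<forall>q\<in>\<rat>. \<forall>r\<in>\<rat>. q \<le> r \<longrightarrow> cdf_density q x \<le> cdf_density r x"
    by (intro AE_ball_countable[THEN iffD2] countable_rat ballI AE_impI AE_cdf_density_mono)
  moreover have "AE x in marginal. \<forall>q\<in>\<rat>. cdf_density q x \<le> 1"
    by (intro AE_ball_countable[THEN iffD2] countable_rat ballI AE_cdf_density_le_1)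
  ultimately show ?thesis
    using AE_SUP_cdf_density AE_INF_cdf_density by eventually_elim (simp add: regular_def)
qed

definition cond_cdf :: "'a \<Rightarrow> real \<Rightarrow> real" where
  "cond_cdf x r = enn2real (INF q\<in>{q\<in>\<rat>. r < q}. cdf_density q x)"

lemma INF_cdf_density_le:
  "q \<in> \<rat> \<Longrightarrow> r < q \<Longrightarrow> (INF q\<in>{q\<in>\<rat>. r < q}. cdf_density q x) \<le> cdf_density q x"
  by (rule INF_lower) simp

lemma ennreal_cond_cdf:
  assumes "x \<in> regular"
  shows "ennreal (cond_cdf x r) = (INF q\<in>{q\<in>\<rat>. r < q}. cdf_density q x)"
proof -
  have "(INF q\<in>{q\<in>\<rat>. r < q}. cdf_density q x) \<le> cdf_density (dyadic_above r 0) x"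
    by (intro INF_cdf_density_le dyadic_above_Rats dyadic_above_gt)
  also have "\<dots> \<le> 1"
    using assms dyadic_above_Rats by (simp add: regular_def)
  finally have "(INF q\<in>{q\<in>\<rat>. r < q}. cdf_density q x) < \<top>"
    using ennreal_less_top[of 1] unfolding ennreal_1 by (rule le_less_trans)
  then show ?thesis
    unfolding cond_cdf_def by simp
qed

lemma cond_cdf_le:
  assumes "x \<in> regular" and "q \<in> \<rat>" and "r < q"
  shows "ennreal (cond_cdf x r) \<le> cdf_density q x"
  unfolding ennreal_cond_cdf[OF assms(1)] using assms(2,3) by (rule INF_cdf_density_le)

lemma cond_cdf_ge:
  assumes "x \<in> regular" and "q \<in> \<rat>" and "q \<le> r"
  shows "cdf_density q x \<le> ennreal (cond_cdf x r)"
  unfolding ennreal_cond_cdf[OF assms(1)] using assms by (intro INF_greatest) (auto simp: regular_def)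

lemma cond_cdf_eq_INF_dyadic_above:
  assumes x: "x \<in> regular"
  shows "ennreal (cond_cdf x r) = (INF n. cdf_density (dyadic_above r n) x)"
proof (rule antisym)
  show "ennreal (cond_cdf x r) \<le> (INF n. cdf_density (dyadic_above r n) x)"
    by (intro INF_greatest cond_cdf_le x dyadic_above_Rats dyadic_above_gt)
  show "(INF n. cdf_density (dyadic_above r n) x) \<le> ennreal (cond_cdf x r)"
    unfolding ennreal_cond_cdf[OF x]
  proof (rule INF_greatest)
    fix q assume q: "q \<in> {q \<in> \<rat>. r < q}"
    then obtain n where "dyadic_above r n < q"
      using dyadic_above_less by auto
    with q x have "cdf_density (dyadic_above r n) x \<le> cdf_density q x"
      using dyadic_above_Rats by (auto simp: regular_def)
    then show "(INF n. cdf_density (dyadic_above r n) x) \<le> cdf_density q x"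
      by (rule INF_lower2[OF UNIV_I])
  qed
qed

lemma cond_cdf_nonneg: "0 \<le> cond_cdf x r"
  by (simp add: cond_cdf_def)

lemma cond_cdf_le_1:
  assumes "x \<in> regular"
  shows "cond_cdf x r \<le> 1"
proof -
  have "ennreal (cond_cdf x r) \<le> cdf_density (dyadic_above r 0) x"
    by (intro cond_cdf_le assms dyadic_above_Rats dyadic_above_gt)
  also have "\<dots> \<le> 1"
    using assms dyadic_above_Rats by (simp add: regular_def)
  finally show ?thesis
    by simp
qed

lemma mono_cond_cdf:
  assumes "x \<in> regular" and "a \<le> b"
  shows "cond_cdf x a \<le> cond_cdf x b"
proof -
  have "ennreal (cond_cdf x a) \<le> ennreal (cond_cdf x b)"
    unfolding ennreal_cond_cdf[OF assms(1)] using assms(2) by (intro INF_superset_mono) auto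
  then show ?thesis
    by (simp add: cond_cdf_nonneg)
qed

lemma continuous_at_right_cond_cdf:
  assumes x: "x \<in> regular"
  shows "continuous (at_right a) (cond_cdf x)"
proof -
  have "\<exists>d>0. cond_cdf x (a + d) - cond_cdf x a < e" if "e > 0" for e
  proof -
    have "(INF q\<in>{q\<in>\<rat>. a < q}. cdf_density q x) < ennreal (cond_cdf x a + e)"
      using that by (simp add: ennreal_cond_cdf[OF x, symmetric] ennreal_less_iff cond_cdf_nonneg)
    then obtain q where q: "q \<in> \<rat>" "a < q" "cdf_density q x < ennreal (cond_cdf x a + e)"
      unfolding INF_less_iff by auto
    have "ennreal (cond_cdf x (a + (q - a) / 2)) \<le> cdf_density q x"
      by (rule cond_cdf_le[OF x q(1)]) (use q(2) in \<open>simp add: field_simps\<close>)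
    then have "ennreal (cond_cdf x (a + (q - a) / 2)) < ennreal (cond_cdf x a + e)"
      using q(3) by (rule le_less_trans)
    then have "cond_cdf x (a + (q - a) / 2) < cond_cdf x a + e"
      by (simp add: ennreal_less_iff cond_cdf_nonneg)
    then show ?thesis
      using q(2) by (intro exI[of _ "(q - a) / 2"]) auto
  qed
  then show ?thesis
    by (subst continuous_at_right_real_increasing) (auto intro: mono_cond_cdf[OF x])
qed

lemma tendsto_cond_cdf_at_top:
  assumes x: "x \<in> regular"
  shows "(cond_cdf x \<longlongrightarrow> 1) at_top"
proof (rule order_tendstoI)
  fix a :: real assume "1 < a"
  then show "eventually (\<lambda>r. cond_cdf x r < a) at_top"
    using cond_cdf_le_1[OF x] by (intro always_eventually allI) (metis le_less_trans)
next
  fix a :: real assume "a < 1"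
  then have "ennreal a < (SUP n::nat. cdf_density (real n) x)"
    using x by (simp add: regular_def)
  then obtain n :: nat where n: "ennreal a < cdf_density (real n) x"
    unfolding less_SUP_iff by auto
  have "a < cond_cdf x r" if "real n \<le> r" for r
  proof -
    have "ennreal a < ennreal (cond_cdf x r)"
      using n cond_cdf_ge[OF x _ that] by (auto intro: less_le_trans)
    then show ?thesis
      using cond_cdf_nonneg[of x r] by (cases "0 \<le> a") (auto simp: ennreal_less_iff)
  qed
  then show "eventually (\<lambda>r. a < cond_cdf x r) at_top"
    unfolding eventually_at_top_linorder by blast
qed

lemma tendsto_cond_cdf_at_bot:
  assumes x: "x \<in> regular"
  shows "(cond_cdf x \<longlongrightarrow> 0) at_bot"
proof (rule order_tendstoI)
  fix a :: real assume "a < 0"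
  then show "eventually (\<lambda>r. a < cond_cdf x r) at_bot"
    using cond_cdf_nonneg by (intro always_eventually allI) (metis less_le_trans)
next
  fix a :: real assume "0 < a"
  then have "(INF n::nat. cdf_density (- real n) x) < ennreal a"
    using x by (simp add: regular_def)
  then obtain n :: nat where n: "cdf_density (- real n) x < ennreal a"
    unfolding INF_less_iff by auto
  have "cond_cdf x r < a" if "r \<le> - real n - 1" for r
  proof -
    have "ennreal (cond_cdf x r) < ennreal a"
      using n cond_cdf_le[OF x, of "- real n" r] that by (auto intro: le_less_trans)
    then show ?thesis
      by (simp add: ennreal_less_iff cond_cdf_nonneg)
  qed
  then show "eventually (\<lambda>r. cond_cdf x r < a) at_bot"
    unfolding eventually_at_bot_linorder by blast
qed

lemma real_distribution_cond_cdf: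
  assumes "x \<in> regular"
  shows "real_distribution (interval_measure (cond_cdf x))"
  using assms
  by (intro real_distribution_interval_measure mono_cond_cdf continuous_at_right_cond_cdf
      tendsto_cond_cdf_at_top tendsto_cond_cdf_at_bot)


lemma measurable_cond_cdf [measurable]: "(\<lambda>x. cond_cdf x r) \<in> borel_measurable borel"
proof -
  have "(\<lambda>x. INF q\<in>{q\<in>\<rat>. r < q}. cdf_density q x) \<in> borel_measurable borel"
    by (rule borel_measurable_INF) (auto intro: countable_subset[OF _ countable_rat])
  then show ?thesis
    unfolding cond_cdf_def by measurable
qed

definition cond_distr :: "'a \<Rightarrow> real measure" where
  "cond_distr x = (if x \<in> regular then interval_measure (cond_cdf x) else return borel 0)"

lemma sets_cond_distr [measurable_cong]: "sets (cond_distr x) = sets borel"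
  by (simp add: cond_distr_def)

lemma prob_space_cond_distr: "prob_space (cond_distr x)"
  using real_distribution_cond_cdf[of x]
  by (auto simp: cond_distr_def real_distribution_def prob_space_return)

lemma emeasure_cond_distr_atMost:
  "emeasure (cond_distr x) {..r} = (if x \<in> regular then ennreal (cond_cdf x r) else indicator {..r} 0)"
  unfolding cond_distr_def
  by (auto intro!: emeasure_interval_measure_Iic mono_cond_cdf continuous_at_right_cond_cdf
      tendsto_cond_cdf_at_bot)

lemma measurable_cond_distr: "cond_distr \<in> borel \<rightarrow>\<^sub>M prob_algebra borel"
proof (rule measurable_prob_algebra_generated[where \<Omega>=UNIV and G="range atMost"])
  show "sets (borel :: real measure) = sigma_sets UNIV (range atMost)"
    by (simp add: borel_eq_atMost)
  show "Int_stable (range (atMost :: real \<Rightarrow> real set))"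
    by (auto simp: Int_stable_def intro!: image_eqI[of _ _ "min _ _"])
  show "(\<lambda>x. emeasure (cond_distr x) A) \<in> borel_measurable borel" if A: "A \<in> range atMost" for A
  proof -
    obtain r where r: "A = {..r}"
      using A by blast
    show ?thesis
      unfolding r emeasure_cond_distr_atMost by measurable
  qed
qed (auto simp: prob_space_cond_distr sets_cond_distr)

lemma measurable_distr_cond_distr_Pair:
  "(\<lambda>x. distr (cond_distr x) borel (Pair x)) \<in> borel \<rightarrow>\<^sub>M prob_algebra borel"
  by (rule measurable_distr_prob_space2[OF measurable_cond_distr measurable_pair_measure_borel])

lemma emeasure_distr_cond_distr_Pair:
  assumes "A \<in> sets borel"
  shows "emeasure (distr (cond_distr x) borel (Pair x)) (A \<times> {..r}) =
    indicator A x * emeasure (cond_distr x) {..r}"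
proof -
  have "A \<times> {..r} \<in> sets (borel :: ('a \<times> real) measure)"
    using times_in_sets[OF assms, of "{..r}"] by (simp add: sets_eq_borel)
  moreover have "Pair x -` (A \<times> {..r}) \<inter> space (cond_distr x) = (if x \<in> A then {..r} else {})"
    using sets_eq_imp_space_eq[OF sets_cond_distr[of x]] by auto
  ultimately show ?thesis
    by (simp add: emeasure_distr measurable_Pair_borel split: split_indicator)
qed

lemma emeasure_bind_cond_distr:
  assumes A [measurable]: "A \<in> sets borel"
  shows "emeasure (marginal \<bind> (\<lambda>x. distr (cond_distr x) borel (Pair x))) (A \<times> {..r}) =
    emeasure \<nu> (A \<times> {..r})"
proof -
  have "emeasure (marginal \<bind> (\<lambda>x. distr (cond_distr x) borel (Pair x))) (A \<times> {..r}) =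
      (\<integral>\<^sup>+x. emeasure (distr (cond_distr x) borel (Pair x)) (A \<times> {..r}) \<partial>marginal)"
    using measurable_prob_algebraD[OF measurable_distr_cond_distr_Pair] times_in_sets[OF A, of "{..r}"]
    by (intro emeasure_bind)
      (simp_all add: space_marginal sets_eq_borel measurable_cong_sets[OF sets_marginal refl])
  also have "\<dots> = (\<integral>\<^sup>+x. (INF n. cdf_density (dyadic_above r n) x * indicator A x) \<partial>marginal)"
    using AE_regular
  proof (intro nn_integral_cong_AE, eventually_elim)
    case (elim x)
    then show ?case
      by (simp add: emeasure_distr_cond_distr_Pair emeasure_cond_distr_atMost cond_cdf_eq_INF_dyadic_above
          split: split_indicator)
  qed
  also have "\<dots> = (INF n. \<integral>\<^sup>+x. cdf_density (dyadic_above r n) x * indicator A x \<partial>marginal)"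
  proof (rule nn_integral_monotone_convergence_INF_AE')
    fix n
    have "AE x in marginal. cdf_density (dyadic_above r (Suc n)) x \<le> cdf_density (dyadic_above r n) x"
      by (rule AE_cdf_density_mono) (rule decseq_SucD[OF decseq_dyadic_above])
    then show "AE x in marginal. cdf_density (dyadic_above r (Suc n)) x * indicator A x \<le>
        cdf_density (dyadic_above r n) x * indicator A x"
      by eventually_elim (auto intro: mult_right_mono)
    show "(\<integral>\<^sup>+x. cdf_density (dyadic_above r 0) x * indicator A x \<partial>marginal) < \<infinity>"
      using emeasure_times_atMost[OF A, of "dyadic_above r 0", symmetric]
        less_top[THEN iffD1, OF emeasure_finite]
      by simp
  qed measurable
  also have "\<dots> = (INF n. emeasure \<nu> (A \<times> {..dyadic_above r n}))"
    by (simp add: emeasure_times_atMost)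
  also have "\<dots> = emeasure \<nu> (\<Inter>n. A \<times> {..dyadic_above r n})"
    using decseq_dyadic_above[of r]
    by (intro INF_emeasure_decseq) (auto simp: decseq_def intro: order_trans)
  also have "(\<Inter>n. A \<times> {..dyadic_above r n}) = A \<times> {..r}"
    using INT_atMost_dyadic_above[of r] by auto
  finally show ?thesis .
qed

theorem disintegration: "\<nu> = marginal \<bind> (\<lambda>x. distr (cond_distr x) borel (Pair x))"
proof (rule measure_eqI_generator_eq[where \<Omega>=UNIV and E="{A \<times> {..r} | A r. A \<in> sets borel}"
      and A="\<lambda>i. UNIV \<times> {..real i}"])
  show "Int_stable {A \<times> {..r} | A (r::real). A \<in> sets (borel :: 'a measure)}"
  proof (rule Int_stableI)
    fix X Y assume "X \<in> {A \<times> {..r} | A (r::real). A \<in> sets (borel :: 'a measure)}"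
      and "Y \<in> {A \<times> {..r} | A (r::real). A \<in> sets (borel :: 'a measure)}"
    then obtain A r B q where "X = A \<times> {..r}" "Y = B \<times> {..q}" "A \<in> sets borel" "B \<in> sets borel"
      by auto
    then show "X \<inter> Y \<in> {A \<times> {..r} | A (r::real). A \<in> sets (borel :: 'a measure)}"
      by (intro CollectI exI[of _ "A \<inter> B"] exI[of _ "min r q"]) auto
  qed
  show "sets \<nu> = sigma_sets UNIV {A \<times> {..r} | A r. A \<in> sets borel}"
    by (simp add: sets_eq_borel sets_borel_prod_eq_sigma_times_atMost)
  show "sets (marginal \<bind> (\<lambda>x. distr (cond_distr x) borel (Pair x))) =
      sigma_sets UNIV {A \<times> {..r} | A r. A \<in> sets borel}"
    by (subst sets_bind[where N=borel]) (simp_all add: space_marginal sets_borel_prod_eq_sigma_times_atMost)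
  show "emeasure \<nu> X = emeasure (marginal \<bind> (\<lambda>x. distr (cond_distr x) borel (Pair x))) X"
    if "X \<in> {A \<times> {..r} | A r. A \<in> sets borel}" for X
    using that emeasure_bind_cond_distr by auto
  show "(\<Union>i. UNIV \<times> {..real i}) = (UNIV :: ('a \<times> real) set)"
    by (auto simp: real_arch_simple)
qed (auto simp: emeasure_finite)

end

lemma exists_disintegration:
  fixes \<nu> :: "('a::second_countable_topology \<times> 'b::euclidean_space) measure"
  assumes "\<nu> \<in> space (prob_algebra borel)"
  obtains \<kappa> where "\<kappa> \<in> borel \<rightarrow>\<^sub>M prob_algebra borel"
    and "\<nu> = distr \<nu> borel fst \<bind> (\<lambda>x. distr (\<kappa> x) borel (Pair x))"
proof -
  have sets_\<nu> [measurable_cong]: "sets \<nu> = sets borel" and "prob_space \<nu>"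
    using assms by (auto simp: space_prob_algebra)
  define code :: "'a \<times> 'b \<Rightarrow> 'a \<times> real" where "code p = (fst p, euclidean_code (snd p))" for p
  define decode :: "'a \<times> real \<Rightarrow> 'a \<times> 'b" where "decode p = (fst p, euclidean_decode (snd p))" for p
  have [measurable]: "code \<in> borel \<rightarrow>\<^sub>M borel" "decode \<in> borel \<rightarrow>\<^sub>M borel"
    unfolding code_def decode_def by measurable
  have "prob_space (distr \<nu> borel code)"
    by (rule prob_space.prob_space_distr[OF \<open>prob_space \<nu>\<close>]) measurable
  then interpret coded: prob_on_prod_real "distr \<nu> borel code"
    by (intro prob_on_prod_real.intro prob_on_prod_real_axioms.intro) simp_all
  define \<kappa> :: "'a \<Rightarrow> 'b measure" where "\<kappa> x = distr (coded.cond_distr x) borel euclidean_decode" for x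
  have "\<kappa> \<in> borel \<rightarrow>\<^sub>M prob_algebra borel"
    using measurable_comp[OF coded.measurable_cond_distr
        measurable_distr_prob_space[OF measurable_euclidean_decode]]
    by (simp add: \<kappa>_def[abs_def] comp_def)
  moreover have "\<nu> = distr \<nu> borel fst \<bind> (\<lambda>x. distr (\<kappa> x) borel (Pair x))"
  proof -
    have marginal: "coded.marginal = distr \<nu> borel fst"
      unfolding coded.marginal_def by (subst distr_distr) (simp_all add: comp_def code_def)
    have "distr (\<kappa> x) borel (Pair x) = distr (distr (coded.cond_distr x) borel (Pair x)) borel decode" for x
      unfolding \<kappa>_def using measurable_Pair_borel[of x]
      by (simp add: distr_distr measurable_cong_sets[OF coded.sets_cond_distr refl] comp_def decode_def)
    then have "distr \<nu> borel fst \<bind> (\<lambda>x. distr (\<kappa> x) borel (Pair x)) =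
        distr (coded.marginal \<bind> (\<lambda>x. distr (coded.cond_distr x) borel (Pair x))) borel decode"
      using measurable_prob_algebraD[OF coded.measurable_distr_cond_distr_Pair]
      by (simp add: marginal distr_bind[where K=borel] measurable_cong_sets[OF coded.sets_marginal refl])
    also have "\<dots> = distr \<nu> borel (decode \<circ> code)"
      by (simp add: coded.disintegration[symmetric] distr_distr)
    also have "decode \<circ> code = id"
      by (auto simp: code_def decode_def euclidean_decode_code)
    finally show ?thesis
      by (simp add: distr_id2 sets_\<nu>)
  qed
  ultimately show thesis
    by (rule that)
qed

section \<open>Curves and parallel transport\<close>

lemma space_curves [simp]: "space curves = C01"
  unfolding curves_def by (simp add: space_measure_of_conv)

lemma sets_curves:
  "sets curves = sigma_sets C01 {(\<lambda>w. w t) -` B \<inter> C01 | t B. t \<in> {0..1} \<and> B \<in> sets borel}"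
  unfolding curves_def by (rule sets_measure_of) auto

lemma preimage_in_sets_curves:
  assumes "t \<in> {0..1}" and "B \<in> sets borel"
  shows "(\<lambda>w. w t) -` B \<inter> C01 \<in> sets curves"
  unfolding sets_curves using assms by (intro sigma_sets.Basic) blast

lemma measurable_ev:
  assumes "t \<in> {0..1}"
  shows "ev t \<in> (curves :: (real \<Rightarrow> 'a::real_normed_vector) measure) \<rightarrow>\<^sub>M borel"
proof (rule measurableI)
  fix B :: "'a set" assume "B \<in> sets borel"
  then show "ev t -` B \<inter> space curves \<in> sets (curves :: (real \<Rightarrow> 'a) measure)"
    using preimage_in_sets_curves[OF assms] by (simp add: ev_def[abs_def])
qed simp

lemma p1_in_C01: "w \<in> C01 \<Longrightarrow> p1 w \<in> C01"
  unfolding C01_def p1_def by (auto intro: continuous_on_fst)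

lemma measurable_p1:
  "p1 \<in> (curves :: (real \<Rightarrow> 'a::real_normed_vector \<times> 'b::real_normed_vector) measure) \<rightarrow>\<^sub>M curves"
proof -
  have "p1 \<in> (curves :: (real \<Rightarrow> 'a \<times> 'b) measure) \<rightarrow>\<^sub>M
      sigma C01 {(\<lambda>w. w t) -` B \<inter> C01 | t B. t \<in> {0..1} \<and> B \<in> sets borel}"
  proof (rule measurable_measure_of)
    fix A assume "A \<in> {(\<lambda>w. w t) -` B \<inter> C01 | t B. t \<in> {0..1} \<and> B \<in> sets (borel :: 'a measure)}"
    then obtain t B where A: "A = (\<lambda>w. w t) -` B \<inter> C01" and t: "t \<in> {0..1}"
      and [measurable]: "B \<in> sets borel"
      by auto
    have "p1 -` A \<inter> space curves = (\<lambda>w. w t) -` (fst -` B) \<inter> (C01 :: (real \<Rightarrow> 'a \<times> 'b) set)"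
      using p1_in_C01 unfolding A by (auto simp: p1_def)
    also have "\<dots> \<in> sets curves"
      using t measurable_sets[OF measurable_fst_borel, of B] by (intro preimage_in_sets_curves) simp_all
    finally show "p1 -` A \<inter> space curves \<in> sets (curves :: (real \<Rightarrow> 'a \<times> 'b) measure)" .
  qed (auto intro: p1_in_C01)
  then show ?thesis
    unfolding curves_def .
qed

text \<open>No measurability of \<open>f\<close> is needed: \<open>distr\<close> is built with \<open>measure_of\<close>, which yields
  the zero measure when \<open>f\<close> is not measurable. This matters for \<open>d2\<close>, whose measurability is
  never established.\<close>
lemma emeasure_vimage_eq_1_of_distr:
  assumes "emeasure (distr M N f) A = 1"
  shows "emeasure M (f -` A \<inter> space M) = 1"
proof -
  have "emeasure (distr M N f) A \<in> {emeasure M (f -` A \<inter> space M), 0}"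
    unfolding distr_def emeasure_measure_of_conv by simp
  with assms show ?thesis
    by auto
qed

lemma closure_Rats_Int_unit_interval: "closure ({0<..<1} \<inter> \<rat>) = {0..1 :: real}"
proof
  show "closure ({0<..<1} \<inter> \<rat>) \<subseteq> {0..1 :: real}"
    by (rule closure_minimal) auto
  have "{0<..<1} \<subseteq> closure ({0<..<1} \<inter> \<rat> :: real set)"
    using open_Int_closure_subset[of "{0<..<1 :: real}" \<rat>] by (simp add: Rats_closure_real)
  from closure_mono[OF this] show "{0..1} \<subseteq> closure ({0<..<1} \<inter> \<rat> :: real set)"
    by simp
qed

lemma snd_eq_of_C1y:
  assumes w: "w \<in> C1y" and d2_Rats: "\<forall>s\<in>\<rat> \<inter> {0..1}. d2 w s = 0" and t: "t \<in> {0..1}"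
  shows "snd (w t) = snd (w 0)"
proof -
  obtain D where D_cont: "continuous_on {0..1} D"
    and D_deriv: "\<And>s. s \<in> {0..1} \<Longrightarrow> ((\<lambda>s. snd (w s)) has_vector_derivative D s) (at s within {0..1})"
    using w unfolding C1y_def by blast
  have "vector_derivative (\<lambda>s. snd (w s)) (at s within {0..1}) = D s" if "s \<in> {0..1}" for s
  proof (rule vector_derivative_within[OF _ D_deriv[OF that]])
    show "at s within {0..1} \<noteq> bot"
      using that trivial_limit_within[of s "{0..1 :: real}"] by (simp add: trivial_limit_def)
  qed
  then have "d2 w s = D s" if "s \<in> {0..1}" for s
    using w that by (simp add: d2_def)
  then have D_Rats: "D s = 0" if "s \<in> {0<..<1} \<inter> \<rat>" for s
    using d2_Rats that by auto
  have "D s = 0" if "s \<in> {0..1}" for s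
  proof (rule continuous_constant_on_closure[of "{0<..<1} \<inter> \<rat>"])
    show "continuous_on (closure ({0<..<1} \<inter> \<rat>)) D"
      unfolding closure_Rats_Int_unit_interval by (rule D_cont)
    show "s \<in> closure ({0<..<1} \<inter> \<rat>)"
      unfolding closure_Rats_Int_unit_interval by (rule that)
  qed (rule D_Rats)
  then have "((\<lambda>s. snd (w s)) has_vector_derivative 0) (at s within {0..1})" if "s \<in> {0..1}" for s
    using D_deriv[OF that] that by simp
  then obtain c where "\<And>s. s \<in> {0..1} \<Longrightarrow> snd (w s) = c"
    using has_vector_derivative_zero_constant[of "{0..1 :: real}" "\<lambda>s. snd (w s)"] by auto
  then show ?thesis
    using t by simp
qed

lemma parallel_transport_AE_snd_eq:
  assumes "parallel_transport \<mu> \<psi> \<eta> \<Psi>" and t: "t \<in> {0..1}"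
  shows "AE w in \<Psi>. snd (w t) = snd (w 0)"
proof -
  have "prob_space \<Psi>" and sets_\<Psi>: "sets \<Psi> = sets curves"
    and C1y: "C1y \<in> sets \<Psi>" "emeasure \<Psi> C1y = 1"
    and d2_\<Psi>: "distr \<Psi> curves d2 = return curves (\<lambda>_. 0)"
    using assms(1) by (auto simp: parallel_transport_def space_prob_algebra)
  interpret \<Psi>: prob_space \<Psi>
    by fact
  have space_\<Psi>: "space \<Psi> = C01"
    using sets_eq_imp_space_eq[OF sets_\<Psi>] by simp
  have "AE w in \<Psi>. w \<in> C1y"
    using C1y by (intro \<Psi>.AE_I_eq_1) (auto simp: space_\<Psi> C1y_def)
  moreover have "AE w in \<Psi>. d2 w s = 0" if s: "s \<in> {0..1}" for s
  proof -
    define Z where "Z = (\<lambda>v. v s) -` {0} \<inter> (C01 :: (real \<Rightarrow> 'a) set)"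
    have "Z \<in> sets curves"
      unfolding Z_def using s by (intro preimage_in_sets_curves) simp_all
    moreover have "(\<lambda>_. 0) \<in> Z"
      unfolding Z_def by (simp add: C01_def)
    ultimately have "emeasure \<Psi> (d2 -` Z \<inter> space \<Psi>) = 1"
      by (intro emeasure_vimage_eq_1_of_distr[where N=curves]) (simp add: d2_\<Psi>)
    moreover from this have "d2 -` Z \<inter> space \<Psi> \<in> sets \<Psi>"
      by (intro emeasure_neq_0_sets) simp
    moreover have "{w \<in> space \<Psi>. d2 w \<in> Z} = d2 -` Z \<inter> space \<Psi>"
      by auto
    ultimately have "AE w in \<Psi>. d2 w \<in> Z"
      by (intro \<Psi>.AE_I_eq_1) simp_all
    then show ?thesis
      by eventually_elim (simp add: Z_def)
  qed
  then have "AE w in \<Psi>. \<forall>s\<in>\<rat> \<inter> {0..1}. d2 w s = 0"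
    by (subst AE_ball_countable) (auto intro: countable_subset[OF _ countable_rat])
  ultimately show ?thesis
    by eventually_elim (rule snd_eq_of_C1y[OF _ _ t])
qed

lemma parallel_transport_marginal:
  assumes "parallel_transport \<mu> \<psi> \<eta> \<Psi>" and t: "t \<in> {0..1}"
  shows "distr (distr \<Psi> borel (ev t)) borel fst = distr \<eta> borel (ev t)"
proof -
  have sets_\<Psi>: "sets \<Psi> = sets curves" and p1_\<Psi>: "distr \<Psi> curves p1 = \<eta>"
    using assms(1) by (auto simp: parallel_transport_def space_prob_algebra)
  have "distr (distr \<Psi> borel (ev t)) borel fst = distr \<Psi> borel (fst \<circ> ev t)"
    using measurable_ev[OF t] by (intro distr_distr) (simp_all add: measurable_cong_sets[OF sets_\<Psi> refl])
  also have "fst \<circ> ev t = ev t \<circ> p1"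
    by (auto simp: ev_def p1_def)
  also have "distr \<Psi> borel (ev t \<circ> p1) = distr (distr \<Psi> curves p1) borel (ev t)"
    using measurable_ev[OF t] measurable_p1
    by (intro distr_distr[symmetric]) (simp_all add: measurable_cong_sets[OF sets_\<Psi> refl])
  finally show ?thesis
    unfolding p1_\<Psi> .
qed

lemma nn_integral_plan:
  fixes \<mu> :: "'a::euclidean_space measure"
  assumes sets_\<mu>: "sets \<mu> = sets borel" and \<psi>: "\<psi> \<in> borel \<rightarrow>\<^sub>M prob_algebra borel"
    and f: "f \<in> borel_measurable borel"
  shows "(\<integral>\<^sup>+p. f p \<partial>plan \<mu> \<psi>) = (\<integral>\<^sup>+x. \<integral>\<^sup>+z. f (x, z) \<partial>\<psi> x \<partial>\<mu>)"
proof -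
  have "(\<lambda>x. distr (\<psi> x) borel (Pair x)) \<in> \<mu> \<rightarrow>\<^sub>M prob_algebra borel"
    using measurable_distr_prob_space2[OF \<psi> measurable_pair_measure_borel]
    unfolding measurable_cong_sets[OF sets_\<mu> refl] .
  then have "(\<integral>\<^sup>+p. f p \<partial>plan \<mu> \<psi>) = (\<integral>\<^sup>+x. \<integral>\<^sup>+p. f p \<partial>distr (\<psi> x) borel (Pair x) \<partial>\<mu>)"
    unfolding plan_def by (rule nn_integral_bind[OF f measurable_prob_algebraD])
  also have "\<dots> = (\<integral>\<^sup>+x. \<integral>\<^sup>+z. f (x, z) \<partial>\<psi> x \<partial>\<mu>)"
  proof (rule nn_integral_cong)
    fix x
    have sets_\<psi>: "sets (\<psi> x) = sets borel"
      using measurable_space[OF \<psi>, of x] by (simp add: space_prob_algebra)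
    have "Pair x \<in> \<psi> x \<rightarrow>\<^sub>M borel"
      using measurable_Pair_borel[of x] unfolding measurable_cong_sets[OF sets_\<psi> refl] .
    then show "(\<integral>\<^sup>+p. f p \<partial>distr (\<psi> x) borel (Pair x)) = (\<integral>\<^sup>+z. f (x, z) \<partial>\<psi> x)"
      by (rule nn_integral_distr) (simp add: f)
  qed
  finally show ?thesis .
qed

lemma Tan_iff_nn_integral_plan:
  fixes \<mu> :: "'a::euclidean_space measure"
  assumes "sets \<mu> = sets borel" and "\<psi> \<in> borel \<rightarrow>\<^sub>M prob_algebra borel"
  shows "\<psi> \<in> Tan \<mu> \<longleftrightarrow> (\<integral>\<^sup>+p. ennreal (norm (snd p) ^ 2) \<partial>plan \<mu> \<psi>) < \<infinity>"
proof -
  have "(\<lambda>p. ennreal (norm (snd p) ^ 2)) \<in> borel_measurable (borel :: ('a \<times> 'a) measure)"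
    by measurable
  from nn_integral_plan[OF assms this] show ?thesis
    using assms(2) by (simp add: Tan_def)
qed

lemma parallel_transport_second_moment:
  assumes pt: "parallel_transport \<mu> \<psi> \<eta> \<Psi>" and \<mu>: "sets \<mu> = sets borel" and \<psi>: "\<psi> \<in> Tan \<mu>"
    and t: "t \<in> {0..1}"
  shows "(\<integral>\<^sup>+p. ennreal (norm (snd p) ^ 2) \<partial>distr \<Psi> borel (ev t)) < \<infinity>"
proof -
  have sets_\<Psi>: "sets \<Psi> = sets curves" and \<Psi>_0: "distr \<Psi> borel (ev 0) = plan \<mu> \<psi>"
    using pt by (auto simp: parallel_transport_def space_prob_algebra)
  have ev: "ev s \<in> \<Psi> \<rightarrow>\<^sub>M borel" if "s \<in> {0..1}" for s
    using measurable_ev[OF that] unfolding measurable_cong_sets[OF sets_\<Psi> refl] .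
  have norm_snd: "(\<lambda>p. ennreal (norm (snd p) ^ 2)) \<in> borel_measurable (distr \<Psi> borel (ev s))" for s
    by measurable
  have "(\<integral>\<^sup>+p. ennreal (norm (snd p) ^ 2) \<partial>distr \<Psi> borel (ev t)) =
      (\<integral>\<^sup>+w. ennreal (norm (snd (w t)) ^ 2) \<partial>\<Psi>)"
    unfolding nn_integral_distr[OF ev[OF t] norm_snd] by (simp add: ev_def)
  also have "\<dots> = (\<integral>\<^sup>+w. ennreal (norm (snd (w 0)) ^ 2) \<partial>\<Psi>)"
    using parallel_transport_AE_snd_eq[OF pt t] by (intro nn_integral_cong_AE) auto
  also have "\<dots> = (\<integral>\<^sup>+p. ennreal (norm (snd p) ^ 2) \<partial>plan \<mu> \<psi>)"
    unfolding \<Psi>_0[symmetric] nn_integral_distr[OF ev[of 0, simplified] norm_snd] by (simp add: ev_def)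
  also have "\<dots> < \<infinity>"
  proof -
    have "\<psi> \<in> borel \<rightarrow>\<^sub>M prob_algebra borel"
      using \<psi> by (simp add: Tan_def)
    with \<psi> show ?thesis
      using Tan_iff_nn_integral_plan[OF \<mu>] by blast
  qed
  finally show ?thesis .
qed

theorem mainTheorem1:
  fixes \<mu> :: "'a::euclidean_space measure" and \<psi> :: "'a \<Rightarrow> 'a measure"
    and \<eta> :: "(real \<Rightarrow> 'a) measure" and \<Psi> :: "(real \<Rightarrow> 'a \<times> 'a) measure"
  assumes "\<mu> \<in> P2"
    and "\<psi> \<in> Tan \<mu>"
    and "\<eta> \<in> space (prob_algebra curves)"
    and "distr \<eta> borel (ev 0) = \<mu>"
    and "parallel_transport \<mu> \<psi> \<eta> \<Psi>"
  shows "\<forall>t\<in>{0..1}. \<exists>\<psi>t. \<psi>t \<in> Tan (distr \<eta> borel (ev t)) \<and>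
            distr \<Psi> borel (ev t) = plan (distr \<eta> borel (ev t)) \<psi>t"
proof
  fix t :: real assume t: "t \<in> {0..1}"
  have "prob_space \<Psi>" and sets_\<Psi>: "sets \<Psi> = sets curves"
    using assms(5) by (auto simp: parallel_transport_def space_prob_algebra)
  moreover have "ev t \<in> \<Psi> \<rightarrow>\<^sub>M borel"
    using measurable_ev[OF t] unfolding measurable_cong_sets[OF sets_\<Psi> refl] .
  ultimately have "distr \<Psi> borel (ev t) \<in> space (prob_algebra borel)"
    by (simp add: space_prob_algebra prob_space.prob_space_distr)
  then obtain \<psi>t where \<psi>t: "\<psi>t \<in> borel \<rightarrow>\<^sub>M prob_algebra borel"
    and disintegration: "distr \<Psi> borel (ev t) =
      distr (distr \<Psi> borel (ev t)) borel fst \<bind> (\<lambda>x. distr (\<psi>t x) borel (Pair x))"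
    by (rule exists_disintegration)
  have plan_eq: "distr \<Psi> borel (ev t) = plan (distr \<eta> borel (ev t)) \<psi>t"
    using disintegration unfolding plan_def parallel_transport_marginal[OF assms(5) t] .
  moreover have "\<psi>t \<in> Tan (distr \<eta> borel (ev t))"
    using parallel_transport_second_moment[OF assms(5) _ assms(2) t] assms(1) \<psi>t
    by (simp add: Tan_iff_nn_integral_plan plan_eq[symmetric] P2_def space_prob_algebra)
  ultimately show "\<exists>\<psi>t. \<psi>t \<in> Tan (distr \<eta> borel (ev t)) \<and>
      distr \<Psi> borel (ev t) = plan (distr \<eta> borel (ev t)) \<psi>t"
    by blast
qed

end
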